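(* Let $\Psi\in\mathcal P_p$, $m\ge p$ and $q\in\{1,2,\ldots\}$. The density $B\mapsto\mathcal W^{-q}(B\mid\Psi,m)$ on $\mathcal P_p$ has a unique global maximizer, namely $$B^*=\Big(\frac{q}{qm+p+1}\Big)^{1/q}\Psi.$$
   Context: $\mathcal P_p$ is the set of positive definite $p\times p$ real matrices. The power inverse Wishart density is $\mathcal W^{-q}(B\mid\Psi,m)=c_{m,q}^{-1}\exp(-\tfrac12\operatorname{tr}((\Psi^{-1/2}B\Psi^{-1/2})^{-q}))|\Psi|^{qm/2}|B|^{-(qm+p+1)/2}$, where $c_{m,q}\in(0,\infty)$ is a normalizing constant depending only on $m,q,p$ and $\Psi^{1/2}$ is the positive definite square root, $\Psi^{-1/2}=(\Psi^{1/2})^{-1}$. *)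

theory Defs
  imports "HOL-Analysis.Analysis"
begin

text \<open>Positive definite real p x p matrices (p = CARD('n)): symmetric with positive quadratic form.\<close>
definition posdef :: "real^'n^'n \<Rightarrow> bool" where
  "posdef A \<longleftrightarrow> transpose A = A \<and> (\<forall>x. x \<noteq> 0 \<longrightarrow> x \<bullet> (A *v x) > 0)"

definition psd_sqrt :: "real^'n^'n \<Rightarrow> real^'n^'n" where
  "psd_sqrt A = (THE S. posdef S \<and> S ** S = A)"

definition matpow :: "real^'n^'n \<Rightarrow> nat \<Rightarrow> real^'n^'n" where
  "matpow A k = ((\<lambda>M. M ** A) ^^ k) (mat 1)"

definition matpow_neg :: "real^'n^'n \<Rightarrow> nat \<Rightarrow> real^'n^'n" where
  "matpow_neg A k = matpow (matrix_inv A) k"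

text \<open>Power inverse Wishart density W^{-q}(B | Psi, m) with normalizing constant c.\<close>
definition pinvwishart ::
  "real \<Rightarrow> nat \<Rightarrow> real \<Rightarrow> real^'n^'n \<Rightarrow> real^'n^'n \<Rightarrow> real" where
  "pinvwishart c q m Psi B =
     inverse c
     * exp (- (1/2) * trace (matpow_neg
            (matrix_inv (psd_sqrt Psi) ** B ** matrix_inv (psd_sqrt Psi)) q))
     * det Psi powr (real q * m / 2)
     * det B powr (- (real q * m + real CARD('n) + 1) / 2)"

end

theory Submission
  imports Defs
begin

(*
  Write p = CARD('n), S = Psi^(1/2) and E = (q m + p + 1)/2.  Every positive definite B
  can be written B = S (Q diag(l) Q^T) S with Q orthogonal and all l_i > 0 (whiten B by
  S^(-1), then diagonalise).  In these coordinates the density factorises as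
    W^(-q)(B | Psi, m) = K * exp (SUM i. g (l_i)),   g x = -(1/2) x^(-q) - E ln x,
  with a constant K > 0.  The scalar profile g has the unique maximiser
  k = (q / (2E))^(1/q) on (0, oo); hence the density is maximal exactly when all l_i = k,
  i.e. when B = S (k I) S = k Psi.  The hypothesis m >= p is only used to ensure E > 0.
*)

section \<open>Diagonal and orthogonally diagonal matrices\<close>

definition diag_mat :: "('n::finite \<Rightarrow> real) \<Rightarrow> real^'n^'n" where
  "diag_mat d = (\<chi> i j. if i = j then d i else 0)"

lemma mult_diag_mat_entry: "(A ** diag_mat d) $ i $ j = A $ i $ j * d j"
proof -
  have "(A ** diag_mat d) $ i $ j = (\<Sum>k\<in>UNIV. if k = j then A $ i $ k * d k else 0)"
    unfolding matrix_matrix_mult_def diag_mat_def vec_lambda_beta by (rule sum.cong) auto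
  then show ?thesis by simp
qed

lemma diag_mat_mult: "diag_mat a ** diag_mat b = diag_mat (\<lambda>i. a i * b i)"
  by (simp add: vec_eq_iff mult_diag_mat_entry) (simp add: diag_mat_def)

lemma diag_mat_const: "diag_mat (\<lambda>_. k) = k *\<^sub>R mat 1"
  by (simp add: diag_mat_def mat_def vec_eq_iff)

lemma diag_mat_vector_mult: "(diag_mat d *v y) $ i = d i * y $ i"
proof -
  have "(diag_mat d *v y) $ i = (\<Sum>k\<in>UNIV. if k = i then d k * y $ k else 0)"
    unfolding matrix_vector_mult_def diag_mat_def vec_lambda_beta by (rule sum.cong) auto
  then show ?thesis by simp
qed

lemma inner_diag_mat: "y \<bullet> (diag_mat d *v y) = (\<Sum>i\<in>UNIV. d i * (y $ i)^2)"
  by (simp add: inner_vec_def diag_mat_vector_mult power2_eq_square mult.commute mult.left_commute)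

lemma dot_transpose_left: "(x::real^'n) \<bullet> (A *v y) = (transpose A *v x) \<bullet> y"
  by (metis dot_lmul_matrix vector_transpose_matrix transpose_transpose)

text \<open>The matrix Q diag(d) Q^T; for orthogonal Q this is the general real symmetric matrix
  with eigenvalues d and eigenvectors the columns of Q.\<close>
definition orth_diag :: "real^'n^'n \<Rightarrow> ('n::finite \<Rightarrow> real) \<Rightarrow> real^'n^'n" where
  "orth_diag Q d = Q ** diag_mat d ** transpose Q"

text \<open>Matrices diagonalised by the same orthogonal Q multiply through their eigenvalues;
  this gives the functional calculus (powers, inverses, square roots) used below.\<close>
lemma orth_diag_mult:
  assumes "orthogonal_matrix Q"
  shows "orth_diag Q a ** orth_diag Q b = orth_diag Q (\<lambda>i. a i * b i)"
proof -
  have "orth_diag Q a ** orth_diag Q b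
      = Q ** diag_mat a ** (transpose Q ** Q) ** diag_mat b ** transpose Q"
    by (simp add: orth_diag_def matrix_mul_assoc)
  also have "\<dots> = Q ** (diag_mat a ** diag_mat b) ** transpose Q"
    using assms by (simp add: orthogonal_matrix matrix_mul_rid matrix_mul_assoc)
  finally show ?thesis by (simp add: orth_diag_def diag_mat_mult)
qed

lemma orth_diag_const:
  "orthogonal_matrix Q \<Longrightarrow> orth_diag Q (\<lambda>_. k) = k *\<^sub>R mat 1"
  by (simp add: orth_diag_def diag_mat_const orthogonal_matrix_def matrix_mul_rid
      matrix_scalar_ac scalar_matrix_assoc[symmetric])

lemma transpose_orth_diag: "transpose (orth_diag Q d) = orth_diag Q d"
proof -
  have "transpose (diag_mat d) = diag_mat d"
    by (simp add: diag_mat_def transpose_def vec_eq_iff)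
  then show ?thesis by (simp add: orth_diag_def matrix_transpose_mul matrix_mul_assoc)
qed

lemma trace_orth_diag:
  assumes "orthogonal_matrix Q"
  shows "trace (orth_diag Q d) = (\<Sum>i\<in>UNIV. d i)"
proof -
  have "trace (orth_diag Q d) = trace (transpose Q ** (Q ** diag_mat d))"
    unfolding orth_diag_def by (rule trace_mul_sym)
  also have "\<dots> = trace (diag_mat d)"
    using assms by (simp add: matrix_mul_assoc orthogonal_matrix)
  finally show ?thesis by (simp add: trace_def diag_mat_def)
qed

lemma det_orth_diag:
  assumes "orthogonal_matrix Q"
  shows "det (orth_diag Q d) = (\<Prod>i\<in>UNIV. d i)"
proof -
  have "det Q * det Q = 1"
    using det_orthogonal_matrix[OF assms] by auto
  moreover have "det (diag_mat d) = (\<Prod>i\<in>UNIV. d i)"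
    by (subst det_diagonal) (auto simp: diag_mat_def)
  ultimately show ?thesis by (simp add: orth_diag_def det_mul det_transpose)
qed

lemma matpow_orth_diag:
  "orthogonal_matrix Q \<Longrightarrow> matpow (orth_diag Q d) k = orth_diag Q (\<lambda>i. d i ^ k)"
  by (induction k) (simp_all add: matpow_def orth_diag_const orth_diag_mult mult.commute)

lemma matrix_inv_unique:
  assumes "(A::real^'n^'n) ** B = mat 1" "B ** A = mat 1"
  shows "matrix_inv A = B"
proof -
  have "\<exists>A'. A ** A' = mat 1 \<and> A' ** A = mat 1" using assms by blast
  then have C: "A ** matrix_inv A = mat 1"
    unfolding matrix_inv_def by (rule someI_ex[THEN conjunct1])
  have "matrix_inv A = (B ** A) ** matrix_inv A" using assms by (simp add: matrix_mul_lid)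
  also have "\<dots> = B" using C by (simp add: matrix_mul_assoc[symmetric] matrix_mul_rid)
  finally show ?thesis .
qed

lemma matrix_inv_orth_diag:
  "orthogonal_matrix Q \<Longrightarrow> \<forall>i. d i \<noteq> 0
    \<Longrightarrow> matrix_inv (orth_diag Q d) = orth_diag Q (\<lambda>i. inverse (d i))"
  by (rule matrix_inv_unique) (simp_all add: orth_diag_mult orth_diag_const)

lemma quad_orth_diag:
  "x \<bullet> (orth_diag Q d *v x) = (transpose Q *v x) \<bullet> (diag_mat d *v (transpose Q *v x))"
proof -
  have "orth_diag Q d *v x = Q *v (diag_mat d *v (transpose Q *v x))"
    by (simp add: orth_diag_def matrix_vector_mul_assoc matrix_mul_assoc del: transpose_matrix_vector)
  then show ?thesis by (simp only: dot_transpose_left[of x Q])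
qed

lemma orth_diag_column:
  assumes "orthogonal_matrix Q"
  shows "orth_diag Q d *v column j Q = d j *\<^sub>R column j Q"
proof -
  have c: "column j Q = Q *v axis j 1"
    by (simp add: column_def matrix_vector_mult_def axis_def vec_eq_iff if_distrib cong: if_cong)
  have "transpose Q *v column j Q = axis j 1"
    using assms by (simp add: c matrix_vector_mul_assoc orthogonal_matrix del: transpose_matrix_vector)
  moreover have "diag_mat d *v axis j 1 = d j *\<^sub>R axis j 1"
    by (simp add: vec_eq_iff diag_mat_vector_mult axis_def)
  ultimately show ?thesis
    by (simp add: orth_diag_def c matrix_vector_mul_assoc[symmetric] matrix_vector_mult_scaleR
        del: transpose_matrix_vector)
qed

lemma eigencolumns_mult:
  assumes "\<And>j. M *v column j Q = e j *\<^sub>R column j (Q::real^'n^'n)"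
  shows "M ** Q = Q ** diag_mat e"
proof -
  have "(M ** Q) $ i $ j = (M *v column j Q) $ i" for i j
    by (simp add: matrix_matrix_mult_def matrix_vector_mult_def column_def)
  then show ?thesis using assms[unfolded column_def vec_eq_iff]
    by (simp add: vec_eq_iff mult_diag_mat_entry column_def mult.commute)
qed

lemma eigencolumns_orth_diag:
  assumes "orthogonal_matrix Q" "\<And>j. M *v column j Q = e j *\<^sub>R column j Q"
  shows "M = orth_diag Q e"
proof -
  have "M = M ** (Q ** transpose Q)" using assms(1) by (simp add: orthogonal_matrix_def matrix_mul_rid)
  also have "\<dots> = orth_diag Q e"
    by (simp add: matrix_mul_assoc eigencolumns_mult[OF assms(2)] orth_diag_def)
  finally show ?thesis .
qed

section \<open>The spectral theorem for real symmetric matrices\<close>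

lemma symmetric_inner:
  "transpose A = A \<Longrightarrow> (x::real^'n) \<bullet> (A *v y) = (A *v x) \<bullet> y"
  by (metis dot_transpose_left)

text \<open>A linear function dominated by a quadratic one near 0 must vanish:
  the first-order condition at a maximum.\<close>
lemma linear_le_quadratic_imp_zero:
  fixes b K :: real
  assumes "\<And>t. 2 * t * b \<le> t^2 * K"
  shows "b = 0"
proof (cases "K \<le> 0")
  case True
  have "2 * b * b \<le> b^2 * K" using assms[of b] by simp
  moreover have "b^2 * K \<le> 0" using True by (simp add: mult_nonneg_nonpos)
  ultimately have "b * b \<le> 0" by (simp add: power2_eq_square)
  then show ?thesis by (metis mult_eq_0_iff not_square_less_zero order_antisym_conv zero_le_square)
next
  case False
  have "2 * (b/K) * b \<le> (b/K)^2 * K" using assms[of "b/K"] by simp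
  then have "2 * b^2 / K \<le> b^2 / K" using False by (simp add: power2_eq_square field_simps)
  then have "b^2 \<le> 0" using False by (simp add: divide_le_cancel)
  then show ?thesis by simp
qed

text \<open>A symmetric matrix has a unit eigenvector in every nonzero invariant subspace V:
  a maximiser v of the quadratic form on the unit sphere of V.  Perturbing v in the
  direction w = A v - (v.Av) v and using the first-order condition gives w = 0.\<close>
lemma symmetric_eigenvector_exists:
  fixes A :: "real^'n^'n"
  assumes sym: "transpose A = A" and V: "subspace V" "V \<noteq> {0}" and inv: "\<forall>x\<in>V. A *v x \<in> V"
  shows "\<exists>v\<in>V. norm v = 1 \<and> A *v v = (v \<bullet> (A *v v)) *\<^sub>R v"
proof -
  define f where "f x = x \<bullet> (A *v x)" for x :: "real^'n"
  define S where "S = V \<inter> sphere 0 1"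
  have "compact S" unfolding S_def
    by (metis Int_commute closed_subspace compact_Int_closed compact_sphere V(1))
  obtain x0 where x0: "x0 \<in> V" "x0 \<noteq> 0" using V subspace_0 by blast
  have "(1 / norm x0) *\<^sub>R x0 \<in> S" using x0 V(1) by (simp add: S_def subspace_scale)
  then have "S \<noteq> {}" by blast
  have cf: "continuous_on S f" unfolding f_def
    by (intro continuous_intros linear_continuous_on matrix_vector_mul_linear)
  obtain v where v: "v \<in> S" and vmax: "\<And>y. y \<in> S \<Longrightarrow> f y \<le> f v"
    using continuous_attains_sup[OF \<open>compact S\<close> \<open>S \<noteq> {}\<close> cf] by blast
  define \<mu> where "\<mu> = f v"
  have vV: "v \<in> V" and nv: "norm v = 1" using v by (auto simp: S_def)
  have vv: "v \<bullet> v = 1" using nv by (simp add: norm_eq_1)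
  have bound: "f x \<le> \<mu> * (x \<bullet> x)" if "x \<in> V" for x
  proof (cases "x = 0")
    case True then show ?thesis by (simp add: f_def)
  next
    case False
    let ?y = "(1 / norm x) *\<^sub>R x"
    have "?y \<in> S" using that False V(1) by (simp add: S_def subspace_scale)
    then have "f ?y \<le> \<mu>" using vmax \<mu>_def by blast
    moreover have "f ?y = f x / (norm x)^2"
      by (simp add: f_def matrix_vector_mult_scaleR power2_eq_square)
    ultimately have "f x \<le> \<mu> * (norm x)^2" using False by (simp add: divide_le_eq)
    then show ?thesis by (simp add: power2_norm_eq_inner)
  qed
  define w where "w = A *v v - \<mu> *\<^sub>R v"
  have wV: "w \<in> V" unfolding w_def using V(1) inv vV
    by (simp add: subspace_diff subspace_scale)
  have first_order: "2 * t * (w \<bullet> w) \<le> t^2 * (\<mu> * (w \<bullet> w) - f w)" for t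
  proof -
    have "v + t *\<^sub>R w \<in> V" using wV vV V(1) by (simp add: subspace_add subspace_scale)
    from bound[OF this] have "f (v + t *\<^sub>R w) \<le> \<mu> * ((v + t *\<^sub>R w) \<bullet> (v + t *\<^sub>R w))" .
    moreover have "f (v + t *\<^sub>R w) = f v + 2 * t * (w \<bullet> (A *v v)) + t^2 * f w"
      using symmetric_inner[OF sym, of v w]
      by (simp add: f_def matrix_vector_right_distrib matrix_vector_mult_scaleR inner_add_left
          inner_add_right power2_eq_square algebra_simps inner_commute)
    moreover have "(v + t *\<^sub>R w) \<bullet> (v + t *\<^sub>R w) = 1 + 2 * t * (v \<bullet> w) + t^2 * (w \<bullet> w)"
      using vv by (simp add: inner_add_left inner_add_right power2_eq_square algebra_simps inner_commute)
    moreover have "w \<bullet> (A *v v) = w \<bullet> w + \<mu> * (v \<bullet> w)"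
      by (simp add: w_def inner_diff_left inner_diff_right inner_commute algebra_simps)
    ultimately have "f v + 2 * t * (w \<bullet> w + f v * (v \<bullet> w)) + t^2 * f w
        \<le> f v * (1 + 2 * t * (v \<bullet> w) + t^2 * (w \<bullet> w))" unfolding \<mu>_def by simp
    then show ?thesis unfolding \<mu>_def by (simp add: algebra_simps)
  qed
  have "w = 0" using linear_le_quadratic_imp_zero[OF first_order] by simp
  then have "A *v v = \<mu> *\<^sub>R v" by (simp add: w_def)
  then show ?thesis using vV nv by (auto simp: \<mu>_def f_def)
qed

text \<open>Every invariant subspace of a symmetric matrix is spanned by an orthonormal family of
  eigenvectors; by induction on the dimension, splitting off one eigenvector and passing to
  its orthogonal complement inside V (which is again invariant).\<close>
lemma symmetric_eigenbasis:
  fixes A :: "real^'n^'n"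
  assumes sym: "transpose A = A"
  shows "subspace V \<Longrightarrow> (\<forall>x\<in>V. A *v x \<in> V) \<Longrightarrow>
    \<exists>B. B \<subseteq> V \<and> pairwise orthogonal B \<and> (\<forall>b\<in>B. norm b = 1 \<and> A *v b = (b \<bullet> (A *v b)) *\<^sub>R b)
        \<and> V \<subseteq> span B"
proof (induction "dim V" arbitrary: V rule: less_induct)
  case less
  show ?case
  proof (cases "V = {0}")
    case True
    then show ?thesis by (intro exI[of _ "{}"]) auto
  next
    case False
    obtain v where vV: "v \<in> V" and nv: "norm v = 1" and ev: "A *v v = (v \<bullet> (A *v v)) *\<^sub>R v"
      using symmetric_eigenvector_exists[OF sym less.prems(1) False less.prems(2)] by blast
    have vv: "v \<bullet> v = 1" using nv by (simp add: norm_eq_1)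
    define V' where "V' = V \<inter> {x. v \<bullet> x = 0}"
    have "{x. v \<bullet> x = 0} = {y. orthogonal v y}" by (simp add: orthogonal_def)
    then have sV': "subspace V'" unfolding V'_def
      by (metis subspace_inter less.prems(1) subspace_orthogonal_to_vector)
    have iV': "\<forall>x\<in>V'. A *v x \<in> V'"
    proof
      fix x assume x: "x \<in> V'"
      have "v \<bullet> (A *v x) = (A *v v) \<bullet> x" by (rule symmetric_inner[OF sym])
      also have "\<dots> = 0" using x by (subst ev) (simp add: V'_def)
      finally show "A *v x \<in> V'" using x less.prems(2) by (simp add: V'_def)
    qed
    have "v \<notin> V'" using vv by (simp add: V'_def)
    moreover have "V' \<subseteq> V" by (auto simp: V'_def)
    ultimately have "V' \<subset> V" using vV by blast
    then have "span V' \<subset> span V"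
      using sV' less.prems(1) by (metis span_eq_iff)
    then have "dim V' < dim V" by (rule dim_psubset)
    from less.hyps[OF this sV' iV'] obtain B' where B':
      "B' \<subseteq> V'" "pairwise orthogonal B'" "\<forall>b\<in>B'. norm b = 1 \<and> A *v b = (b \<bullet> (A *v b)) *\<^sub>R b"
      "V' \<subseteq> span B'" by blast
    show ?thesis
    proof (intro exI[of _ "insert v B'"] conjI)
      show "insert v B' \<subseteq> V" using B'(1) vV by (auto simp: V'_def)
      show "pairwise orthogonal (insert v B')"
        using B'(1,2) vv unfolding pairwise_insert
        by (auto simp: V'_def orthogonal_def inner_commute)
      show "\<forall>b\<in>insert v B'. norm b = 1 \<and> A *v b = (b \<bullet> (A *v b)) *\<^sub>R b"
        using B'(3) nv ev by auto
      show "V \<subseteq> span (insert v B')"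
      proof
        fix x assume x: "x \<in> V"
        have "x - (v \<bullet> x) *\<^sub>R v \<in> V'"
          using x vV vv less.prems(1) by (simp add: V'_def subspace_diff subspace_scale inner_diff_right)
        then have "x - (v \<bullet> x) *\<^sub>R v \<in> span (insert v B')"
          using B'(4) span_mono[of B' "insert v B'"] by auto
        moreover have "(v \<bullet> x) *\<^sub>R v \<in> span (insert v B')"
          by (simp add: span_base span_scale)
        ultimately have "(x - (v \<bullet> x) *\<^sub>R v) + (v \<bullet> x) *\<^sub>R v \<in> span (insert v B')"
          by (rule span_add)
        then show "x \<in> span (insert v B')" by simp
      qed
    qed
  qed
qed

text \<open>Spectral theorem: a real symmetric matrix is Q diag(d) Q^T with Q orthogonal; the
  columns of Q enumerate an orthonormal eigenbasis of the whole space.\<close>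
theorem spectral_theorem:
  fixes A :: "real^'n^'n"
  assumes sym: "transpose A = A"
  obtains Q d where "orthogonal_matrix Q" "A = orth_diag Q d"
proof -
  obtain B where B: "pairwise orthogonal B" "\<forall>b\<in>B. norm b = 1 \<and> A *v b = (b \<bullet> (A *v b)) *\<^sub>R b"
    "UNIV \<subseteq> span B"
    using symmetric_eigenbasis[OF sym, of UNIV] by auto
  have "0 \<notin> B" using B(2) by force
  then have ind: "independent B" using B(1) pairwise_orthogonal_independent by blast
  then have fin: "finite B" using independent_bound by blast
  have "span B = UNIV" using B(3) by auto
  then have "card B = CARD('n)" using dim_span_eq_card_independent[OF ind] by simp
  then obtain f where f: "bij_betw f (UNIV::'n set) B"
    using finite_same_card_bij[OF finite_class.finite_UNIV fin] by metis
  define Q :: "real^'n^'n" where "Q = (\<chi> i j. f j $ i)"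
  have col: "column j Q = f j" for j by (simp add: Q_def column_def vec_eq_iff)
  have fB: "f j \<in> B" for j using f by (auto simp: bij_betw_def)
  have oQ: "orthogonal_matrix Q"
    unfolding orthogonal_matrix_orthonormal_columns col
  proof (intro conjI allI impI)
    fix i show "norm (f i) = 1" using B(2) fB by auto
  next
    fix i j :: 'n assume "i \<noteq> j"
    then have "f i \<noteq> f j" using f by (auto simp: bij_betw_def inj_on_def)
    then show "orthogonal (f i) (f j)" using B(1) fB by (auto simp: pairwise_def)
  qed
  have "A *v column j Q = (f j \<bullet> (A *v f j)) *\<^sub>R column j Q" for j
    using B(2) fB by (simp add: col)
  then have "A = orth_diag Q (\<lambda>j. f j \<bullet> (A *v f j))"
    by (rule eigencolumns_orth_diag[OF oQ])
  then show ?thesis using oQ that by blast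
qed

section \<open>Positive definite matrices\<close>

lemma posdef_orth_diag_iff:
  assumes o: "orthogonal_matrix Q"
  shows "posdef (orth_diag Q d) \<longleftrightarrow> (\<forall>i. d i > 0)"
proof
  assume p: "posdef (orth_diag Q d)"
  show "\<forall>i. d i > 0"
  proof
    fix i
    let ?x = "Q *v axis i (1::real)"
    have tx: "transpose Q *v ?x = axis i 1"
      using o by (simp add: matrix_vector_mul_assoc orthogonal_matrix del: transpose_matrix_vector)
    have axis_sq: "(axis i 1 $ j)^2 = (if j = i then 1 else (0::real))" for j
      by (simp add: axis_def)
    have "?x \<noteq> 0" using tx by (metis axis_eq_0_iff matrix_vector_mult_0_right zero_neq_one)
    then have "?x \<bullet> (orth_diag Q d *v ?x) > 0" using p by (simp add: posdef_def)
    moreover have "?x \<bullet> (orth_diag Q d *v ?x) = d i"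
      unfolding quad_orth_diag tx inner_diag_mat axis_sq by (simp add: if_distrib cong: if_cong)
    ultimately show "d i > 0" by simp
  qed
next
  assume d: "\<forall>i. d i > 0"
  show "posdef (orth_diag Q d)"
    unfolding posdef_def
  proof (intro conjI allI impI)
    show "transpose (orth_diag Q d) = orth_diag Q d" by (rule transpose_orth_diag)
    fix x :: "real^'a" assume "x \<noteq> 0"
    let ?y = "transpose Q *v x"
    have "Q *v ?y = x"
      using o by (simp add: matrix_vector_mul_assoc orthogonal_matrix_def del: transpose_matrix_vector)
    then have "?y \<noteq> 0" using \<open>x \<noteq> 0\<close> by auto
    then obtain j where j: "?y $ j \<noteq> 0" by (auto simp: vec_eq_iff)
    have "0 < (\<Sum>i\<in>UNIV. d i * (?y $ i)^2)"
      by (rule sum_pos2[of _ j]) (use d j in \<open>auto simp: less_imp_le\<close>)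
    then show "x \<bullet> (orth_diag Q d *v x) > 0" by (simp add: quad_orth_diag inner_diag_mat)
  qed
qed

lemma posdef_decomp:
  assumes "posdef (A::real^'n^'n)"
  obtains Q d where "orthogonal_matrix Q" "A = orth_diag Q d" "\<forall>i. d i > 0"
proof -
  have "transpose A = A" using assms by (simp add: posdef_def)
  then obtain Q d where "orthogonal_matrix Q" "A = orth_diag Q d" by (rule spectral_theorem)
  with assms posdef_orth_diag_iff show ?thesis using that by blast
qed

lemma posdef_det_pos: "posdef A \<Longrightarrow> det A > 0"
  by (erule posdef_decomp) (simp add: det_orth_diag prod_pos)

lemma posdef_scaleR:
  assumes "posdef A" "k > 0"
  shows "posdef (k *\<^sub>R A)"
  using assms by (simp add: posdef_def transpose_scalar scaleR_matrix_vector_assoc[symmetric])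

lemma posdef_inverse:
  assumes "posdef A"
  shows "A ** matrix_inv A = mat 1" "matrix_inv A ** A = mat 1" "posdef (matrix_inv A)"
proof -
  obtain Q d where Q: "orthogonal_matrix Q" "A = orth_diag Q d" "\<forall>i. d i > 0"
    using posdef_decomp[OF assms] .
  have d0: "\<forall>i. d i \<noteq> 0" using Q(3) by (metis less_irrefl)
  show "A ** matrix_inv A = mat 1" "matrix_inv A ** A = mat 1"
    using Q(1) d0 unfolding Q(2) by (simp_all add: matrix_inv_orth_diag orth_diag_mult orth_diag_const)
  show "posdef (matrix_inv A)"
    using Q d0 unfolding Q(2) by (simp add: matrix_inv_orth_diag posdef_orth_diag_iff)
qed

lemma posdef_congruence:
  fixes T :: "real^'n^'n"
  assumes B: "posdef B" and T: "T' ** T = mat 1"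
  shows "posdef (transpose T ** B ** T)"
  unfolding posdef_def
proof (intro conjI allI impI)
  show "transpose (transpose T ** B ** T) = transpose T ** B ** T"
    using B by (simp add: posdef_def matrix_transpose_mul matrix_mul_assoc)
  fix x :: "real^'n" assume "x \<noteq> 0"
  have "T' *v (T *v x) = x" using T by (simp add: matrix_vector_mul_assoc)
  then have "T *v x \<noteq> 0" using \<open>x \<noteq> 0\<close> by auto
  then have "(T *v x) \<bullet> (B *v (T *v x)) > 0" using B by (simp add: posdef_def)
  moreover have "x \<bullet> ((transpose T ** B ** T) *v x) = (T *v x) \<bullet> (B *v (T *v x))"
    by (simp add: matrix_vector_mul_assoc[symmetric] dot_transpose_left[of x "transpose T"]
        del: transpose_matrix_vector)
  ultimately show "x \<bullet> ((transpose T ** B ** T) *v x) > 0" by simp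
qed

section \<open>The positive definite square root\<close>

text \<open>If T is positive definite and T^2 u = s^2 u with s > 0, then T u = s u: the defect
  w = T u - s u satisfies T w = -s w, which positive definiteness rules out unless w = 0.\<close>
lemma posdef_sqrt_eigenvector:
  assumes T: "posdef T" and s: "s > 0" and u: "(T ** T) *v u = (s * s) *\<^sub>R u"
  shows "T *v u = s *\<^sub>R u"
proof -
  define w where "w = T *v u - s *\<^sub>R u"
  have "T *v w = (T ** T) *v u - s *\<^sub>R (T *v u)"
    by (simp add: w_def matrix_vector_mult_diff_distrib matrix_vector_mult_scaleR
        matrix_vector_mul_assoc)
  also have "\<dots> = - s *\<^sub>R w"
    using u by (simp add: w_def algebra_simps)
  finally have Tw: "T *v w = - s *\<^sub>R w" .
  have "w = 0"
  proof (rule ccontr)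
    assume "w \<noteq> 0"
    then have "w \<bullet> (T *v w) > 0" using T by (simp add: posdef_def)
    moreover have "w \<bullet> (T *v w) = - (s * (w \<bullet> w))" by (simp add: Tw)
    moreover have "s * (w \<bullet> w) \<ge> 0" using s by simp
    ultimately show False by linarith
  qed
  then show ?thesis by (simp add: w_def)
qed

text \<open>Uniqueness of the square root: a positive definite square root T of Q diag(d) Q^T
  has the columns of Q as eigenvectors, with eigenvalues sqrt(d_i).\<close>
lemma posdef_sqrt_unique:
  assumes o: "orthogonal_matrix Q" and d: "\<forall>i. d i > 0"
    and T: "posdef T" "T ** T = orth_diag Q d"
  shows "T = orth_diag Q (\<lambda>i. sqrt (d i))"
proof (rule eigencolumns_orth_diag[OF o])
  fix j
  have "(T ** T) *v column j Q = (sqrt (d j) * sqrt (d j)) *\<^sub>R column j Q"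
    using d by (simp add: T(2) orth_diag_column[OF o] less_imp_le)
  then show "T *v column j Q = sqrt (d j) *\<^sub>R column j Q"
    using posdef_sqrt_eigenvector[OF T(1)] d by simp
qed

text \<open>psd_sqrt Psi is well defined: Q diag(sqrt d) Q^T is a positive definite square root
  of Psi = Q diag(d) Q^T, and it is the only one.\<close>
lemma psd_sqrt:
  assumes "posdef Psi"
  shows "posdef (psd_sqrt Psi)" "psd_sqrt Psi ** psd_sqrt Psi = Psi"
proof -
  obtain Q d where o: "orthogonal_matrix Q" and P: "Psi = orth_diag Q d" and d: "\<forall>i. d i > 0"
    using posdef_decomp[OF assms] by blast
  let ?S = "orth_diag Q (\<lambda>i. sqrt (d i))"
  have "\<exists>!S. posdef S \<and> S ** S = Psi"
  proof (rule ex1I[of _ ?S])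
    show "posdef ?S \<and> ?S ** ?S = Psi"
      using o d by (simp add: posdef_orth_diag_iff orth_diag_mult P less_imp_le)
    fix T assume "posdef T \<and> T ** T = Psi"
    then show "T = ?S" using posdef_sqrt_unique[OF o d] P by blast
  qed
  then have "posdef (psd_sqrt Psi) \<and> psd_sqrt Psi ** psd_sqrt Psi = Psi"
    unfolding psd_sqrt_def by (rule theI')
  then show "posdef (psd_sqrt Psi)" "psd_sqrt Psi ** psd_sqrt Psi = Psi" by auto
qed

text \<open>Whitening: with S = psd_sqrt Psi, every positive definite B has the form
  S (Q diag(l) Q^T) S with Q orthogonal and l > 0, namely from the spectral decomposition
  of the positive definite matrix S^(-1) B S^(-1).\<close>
lemma posdef_whitened_decomp:
  assumes Psi: "posdef Psi" and B: "posdef B"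
  obtains Q l where "orthogonal_matrix Q" "\<forall>i. l i > 0"
    "B = psd_sqrt Psi ** orth_diag Q l ** psd_sqrt Psi"
proof -
  define S where "S = psd_sqrt Psi"
  define Si where "Si = matrix_inv S"
  have S: "posdef S" using psd_sqrt(1)[OF Psi] by (simp add: S_def)
  have SSi: "S ** Si = mat 1" "Si ** S = mat 1" "posdef Si"
    using posdef_inverse[OF S] by (simp_all add: Si_def)
  have "transpose Si = Si" using SSi(3) by (simp add: posdef_def)
  then have "posdef (Si ** B ** Si)"
    using posdef_congruence[OF B SSi(1)] by simp
  then obtain Q l where Q: "orthogonal_matrix Q" "Si ** B ** Si = orth_diag Q l" "\<forall>i. l i > 0"
    by (rule posdef_decomp)
  have "S ** (Si ** B ** Si) ** S = (S ** Si) ** B ** (Si ** S)"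
    by (simp add: matrix_mul_assoc)
  also have "\<dots> = B" by (simp add: SSi matrix_mul_lid matrix_mul_rid)
  finally show ?thesis using that Q by (simp add: S_def)
qed

section \<open>The scalar profile\<close>

text \<open>The strict form of ln y \<le> y - 1, from the non-strict one applied to sqrt y.\<close>
lemma ln_less_minus_one:
  fixes y :: real
  assumes "y > 0" "y \<noteq> 1"
  shows "ln y < y - 1"
proof -
  define r where "r = sqrt y"
  have r: "r > 0" "r * r = y" using assms by (auto simp: r_def)
  have "r \<noteq> 1" using r assms by auto
  have "ln y = ln (r * r)" using r(2) by simp
  also have "\<dots> = 2 * ln r" using r(1) by (simp add: ln_mult)
  also have "\<dots> \<le> 2 * (r - 1)" using ln_le_minus_one[OF r(1)] by simp
  also have "\<dots> < r * r - 1"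
  proof -
    have "(r - 1) * (r - 1) > 0" using \<open>r \<noteq> 1\<close> by (cases "r < 1") (auto simp: zero_less_mult_iff)
    then show ?thesis by (simp add: algebra_simps)
  qed
  finally show ?thesis unfolding r(2) .
qed

lemma log_minus_linear_strict_max:
  fixes a u :: real
  assumes a: "a > 0" and u: "u > 0" "u \<noteq> a"
  shows "a * ln u - u < a * ln a - a"
proof -
  have "ln (u / a) < u / a - 1" using assms by (intro ln_less_minus_one) auto
  then have "a * ln (u / a) < a * (u / a - 1)" using a by simp
  then show ?thesis using a u by (simp add: ln_div right_diff_distrib)
qed

text \<open>The one-dimensional factor of the density in spectral coordinates.\<close>
definition wishart_profile :: "nat \<Rightarrow> real \<Rightarrow> real \<Rightarrow> real" where
  "wishart_profile q E x = -(1/2) * inverse x ^ q - E * ln x"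

text \<open>Substituting u = x^(-q), the profile becomes (1/2)((2E/q) ln u - u); so it has the
  unique maximiser x = (q/(2E))^(1/q) on the positive reals.\<close>
lemma wishart_profile_strict_max:
  assumes q: "q \<ge> 1" and E: "E > 0" and x: "x > 0"
    and x_ne: "x \<noteq> (real q / (2 * E)) powr (1 / real q)"
  shows "wishart_profile q E x < wishart_profile q E ((real q / (2 * E)) powr (1 / real q))"
proof -
  define k where "k = (real q / (2 * E)) powr (1 / real q)"
  define a where "a = 2 * E / real q"
  have k: "k > 0" and a: "a > 0" using q E by (simp_all add: k_def a_def)
  have "k ^ q = real q / (2 * E)"
    using q E unfolding k_def by (simp add: powr_realpow[symmetric] powr_powr)
  then have ka: "inverse k ^ q = a" by (simp add: a_def power_inverse)
  have subst: "wishart_profile q E z = (1/2) * (a * ln (inverse z ^ q) - inverse z ^ q)"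
    if "z > 0" for z
  proof -
    have "ln (inverse z ^ q) = - (real q * ln z)"
      using that by (subst ln_realpow) (simp_all add: ln_inverse)
    then show ?thesis using q by (simp add: wishart_profile_def a_def)
  qed
  have "inverse x ^ q \<noteq> inverse k ^ q"
    using q x k x_ne by (simp add: k_def power_eq_iff_eq_base)
  then have "a * ln (inverse x ^ q) - inverse x ^ q < a * ln a - a"
    using a x by (intro log_minus_linear_strict_max) (simp_all add: ka)
  then show ?thesis using x k by (simp add: subst ka k_def[symmetric])
qed

section \<open>The density in whitened spectral coordinates\<close>

text \<open>For B = S (Q diag(l) Q^T) S with S = Psi^(1/2), the trace term of the density only
  depends on the l_i and det B = det Psi * prod l_i, so the density factorises.\<close>
lemma pinvwishart_whitened:
  fixes Psi :: "real^'n^'n" and m :: real and q :: nat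
  assumes Psi: "posdef Psi" and Q: "orthogonal_matrix Q" and l: "\<forall>i. l i > 0"
  defines "E \<equiv> (real q * m + real CARD('n) + 1) / 2"
  shows "pinvwishart c q m Psi (psd_sqrt Psi ** orth_diag Q l ** psd_sqrt Psi)
       = inverse c * det Psi powr (real q * m / 2 - E) * exp (\<Sum>i\<in>UNIV. wishart_profile q E (l i))"
proof -
  define S where "S = psd_sqrt Psi"
  define Si where "Si = matrix_inv S"
  define D where "D = det Psi"
  have S: "posdef S" "S ** S = Psi" using psd_sqrt[OF Psi] by (simp_all add: S_def)
  have SSi: "S ** Si = mat 1" "Si ** S = mat 1" using posdef_inverse[OF S(1)] by (simp_all add: Si_def)
  have l0: "\<forall>i. l i \<noteq> 0" using l by (metis less_irrefl)
  have "Si ** (S ** orth_diag Q l ** S) ** Si = (Si ** S) ** orth_diag Q l ** (S ** Si)"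
    by (simp add: matrix_mul_assoc)
  then have whiten: "Si ** (S ** orth_diag Q l ** S) ** Si = orth_diag Q l"
    by (simp add: SSi matrix_mul_lid matrix_mul_rid)
  have trace: "trace (matpow_neg (orth_diag Q l) q) = (\<Sum>i\<in>UNIV. inverse (l i) ^ q)"
    using Q l0 by (simp add: matpow_neg_def matrix_inv_orth_diag matpow_orth_diag trace_orth_diag)
  have det: "det (S ** orth_diag Q l ** S) = D * (\<Prod>i\<in>UNIV. l i)"
    using Q by (simp add: det_mul det_orth_diag D_def S(2)[symmetric])
  have D: "D > 0" using posdef_det_pos[OF Psi] by (simp add: D_def)
  have "(\<Prod>i\<in>UNIV. l i) powr (-E) = (\<Prod>i\<in>UNIV. l i powr (-E))"
    by (rule prod_powr_distrib)
  also have "\<dots> = (\<Prod>i\<in>UNIV. exp (- E * ln (l i)))"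
    using l0 by (intro prod.cong refl) (simp add: powr_def mult.commute)
  finally have det_powr: "(D * (\<Prod>i\<in>UNIV. l i)) powr (-E) = D powr (-E) * exp (\<Sum>i\<in>UNIV. - E * ln (l i))"
    using D l by (simp add: powr_mult prod_nonneg less_imp_le exp_sum)
  define T where "T = (\<Sum>i\<in>UNIV. inverse (l i) ^ q)"
  define L where "L = (\<Sum>i\<in>UNIV. - E * ln (l i))"
  have profile_sum: "(\<Sum>i\<in>UNIV. wishart_profile q E (l i)) = -(1/2) * T + L"
    by (simp add: wishart_profile_def T_def L_def sum_subtractf sum_negf sum_distrib_left)
  have exponent: "- (real q * m + real CARD('n) + 1) / 2 = -E" unfolding E_def by linarith
  have split_powr: "D powr (real q * m / 2 - E) = D powr (real q * m / 2) * D powr (-E)"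
    using powr_add[of D "real q * m / 2" "-E"] by simp
  show ?thesis
    unfolding pinvwishart_def S_def[symmetric] Si_def[symmetric] whiten trace det exponent
      det_powr profile_sum D_def[symmetric] split_powr exp_add T_def[symmetric] L_def[symmetric]
    by (simp only: mult_ac)
qed

text \<open>The density is strictly smaller at every positive definite B other than
  k Psi, k = (q / (q m + p + 1))^(1/q): in whitened spectral coordinates some eigenvalue
  l_j differs from k, where the profile is strictly below its maximum.\<close>
theorem pinvwishart_strict_max:
  fixes Psi B :: "real^'n^'n"
  assumes Psi: "posdef Psi" and B: "posdef B" and q: "q \<ge> 1"
    and c: "c > 0" and dof: "real q * m + real CARD('n) + 1 > 0"
    and B_ne: "B \<noteq> (real q / (real q * m + real CARD('n) + 1)) powr (1 / real q) *\<^sub>R Psi"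
  shows "pinvwishart c q m Psi B
       < pinvwishart c q m Psi ((real q / (real q * m + real CARD('n) + 1)) powr (1 / real q) *\<^sub>R Psi)"
proof -
  define E where "E = (real q * m + real CARD('n) + 1) / 2"
  define k where "k = (real q / (2 * E)) powr (1 / real q)"
  define K where "K = inverse c * det Psi powr (real q * m / 2 - E)"
  define S where "S = psd_sqrt Psi"
  have E: "E > 0" using dof by (simp add: E_def)
  have "2 * E = real q * m + real CARD('n) + 1" by (simp add: E_def)
  then have k_eq: "(real q / (real q * m + real CARD('n) + 1)) powr (1 / real q) = k"
    by (simp add: k_def)
  have k: "k > 0" using q E by (simp add: k_def)
  have K: "K > 0" using c posdef_det_pos[OF Psi] by (simp add: K_def)
  have scaled: "S ** orth_diag Q' (\<lambda>_. k) ** S = k *\<^sub>R Psi" if "orthogonal_matrix Q'" for Q'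
    using that psd_sqrt(2)[OF Psi]
    by (simp add: S_def orth_diag_const matrix_scalar_ac scalar_matrix_assoc[symmetric] matrix_mul_rid)
  obtain Q l where Q: "orthogonal_matrix Q" and l: "\<forall>i. l i > 0" and B_eq: "B = S ** orth_diag Q l ** S"
    using posdef_whitened_decomp[OF Psi B] unfolding S_def .
  obtain j where j: "l j \<noteq> k"
    using B_ne scaled[OF Q] unfolding B_eq k_eq by (metis ext)
  have profile_le: "wishart_profile q E x \<le> wishart_profile q E k" if "x > 0" for x
    using wishart_profile_strict_max[OF q E that] by (cases "x = k") (auto simp: k_def)
  have "(\<Sum>i\<in>UNIV. wishart_profile q E (l i)) < (\<Sum>i\<in>(UNIV::'n set). wishart_profile q E k)"
    using wishart_profile_strict_max[OF q E, of "l j"] l j profile_le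
    by (intro sum_strict_mono_ex1) (auto simp: k_def)
  then have "K * exp (\<Sum>i\<in>UNIV. wishart_profile q E (l i))
      < K * exp (\<Sum>i\<in>(UNIV::'n set). wishart_profile q E k)"
    using K by simp
  then show ?thesis
    using pinvwishart_whitened[OF Psi Q l] pinvwishart_whitened[OF Psi orthogonal_matrix_id, of "\<lambda>_. k"]
      scaled[OF orthogonal_matrix_id] k
    unfolding B_eq k_eq K_def E_def S_def by simp
qed

theorem mainTheorem3:
  fixes Psi :: "real^'n^'n" and m :: real and q :: nat and c :: real
  assumes "posdef Psi"
    and "m \<ge> real CARD('n)"
    and "q \<ge> 1"
    and "c > 0"
  shows "\<forall>B. (posdef B \<and> (\<forall>B'. posdef B' \<longrightarrow> pinvwishart c q m Psi B' \<le> pinvwishart c q m Psi B))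
            \<longleftrightarrow> B = (real q / (real q * m + real CARD('n) + 1)) powr (1 / real q) *\<^sub>R Psi"
proof -
  let ?k = "(real q / (real q * m + real CARD('n) + 1)) powr (1 / real q)"
  let ?f = "pinvwishart c q m Psi"
  have "m \<ge> 0" using assms(2) of_nat_0_le_iff order_trans by blast
  then have dof: "real q * m + real CARD('n) + 1 > 0"
    by (simp add: add_nonneg_pos)
  have star: "posdef (?k *\<^sub>R Psi)"
    using assms(1,3) dof by (intro posdef_scaleR) simp_all
  have strict: "?f B < ?f (?k *\<^sub>R Psi)" if "posdef B" "B \<noteq> ?k *\<^sub>R Psi" for B
    using pinvwishart_strict_max[OF assms(1) that(1) assms(3,4) dof that(2)] .
  show ?thesis
  proof (intro allI iffI)
    fix B assume "posdef B \<and> (\<forall>B'. posdef B' \<longrightarrow> ?f B' \<le> ?f B)"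
    then show "B = ?k *\<^sub>R Psi" using strict star by (meson not_le)
  next
    fix B assume "B = ?k *\<^sub>R Psi"
    then show "posdef B \<and> (\<forall>B'. posdef B' \<longrightarrow> ?f B' \<le> ?f B)"
      using strict star by (metis order_refl less_imp_le)
  qed
qed

end
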